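(* Consider a binary MILP (maximization) solved by branch-and-bound with the worst-bound node selection rule and an LP solver satisfying Assumption 1. Then the branch-and-bound tree never branches on a node whose LP optimal objective value equals the optimal objective value of the MILP.
   Context: Branch-and-bound for a binary MILP $\max\{c^\top x: x\in P,\ x_1,\dots,x_n\in\{0,1\}\}$: each node is the LP relaxation with some binary variables fixed to $0$ or $1$; a node is pruned if its LP is infeasible, if the returned LP solution is integral, or if its LP value is worse than the value of an integral solution already found; the worst-bound rule selects next an open node with the largest LP value. Assumption 1: if the LP at a node has an integral optimal solution, the LP solver returns one. *)

theory Defs
  imports "HOL-Analysis.Analysis"
begin

text \<open>A node of the branch-and-bound tree is a partial fixing
  F :: 'n => bool option (Some True = fixed to 1, Some False = fixed to 0).\<close>

definition binary :: "real^'n \<Rightarrow> bool" where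
  "binary x \<longleftrightarrow> (\<forall>i. x$i = 0 \<or> x$i = 1)"

definition integral_vec :: "real^'n \<Rightarrow> bool" where
  "integral_vec x \<longleftrightarrow> (\<forall>i. x$i \<in> \<int>)"

definition milp_opt :: "real^'n \<Rightarrow> (real^'n) set \<Rightarrow> real^'n \<Rightarrow> bool" where
  "milp_opt c P x \<longleftrightarrow> x \<in> P \<and> binary x \<and> (\<forall>y\<in>P. binary y \<longrightarrow> c \<bullet> y \<le> c \<bullet> x)"

definition lp_feas :: "(real^'n) set \<Rightarrow> ('n \<Rightarrow> bool option) \<Rightarrow> (real^'n) set" where
  "lp_feas P F = {x \<in> P. (\<forall>i. 0 \<le> x$i \<and> x$i \<le> 1) \<and>
                          (\<forall>i v. F i = Some v \<longrightarrow> x$i = (if v then 1 else 0))}"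

definition lp_opt :: "real^'n \<Rightarrow> (real^'n) set \<Rightarrow> ('n \<Rightarrow> bool option) \<Rightarrow> real^'n \<Rightarrow> bool" where
  "lp_opt c P F x \<longleftrightarrow> x \<in> lp_feas P F \<and> (\<forall>y\<in>lp_feas P F. c \<bullet> y \<le> c \<bullet> x)"

text \<open>The LP solver returns an optimal solution; Assumption 1: if the LP has an
  integral optimal solution, the returned one is integral.\<close>
definition lp_solver_ok :: "real^'n \<Rightarrow> (real^'n) set \<Rightarrow> ('n \<Rightarrow> bool option) \<Rightarrow> real^'n \<Rightarrow> bool" where
  "lp_solver_ok c P F x \<longleftrightarrow> lp_opt c P F x \<and>
     ((\<exists>y. lp_opt c P F y \<and> integral_vec y) \<longrightarrow> integral_vec x)"

text \<open>State: set of open nodes and incumbent value (None = no integral solution found).\<close>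
type_synonym 'n bb_state = "('n \<Rightarrow> bool option) set \<times> real option"

definition bb_process ::
  "real^'n \<Rightarrow> (real^'n) set \<Rightarrow> (('n \<Rightarrow> bool option) \<Rightarrow> real^'n) \<Rightarrow>
   ('n \<Rightarrow> bool option) \<Rightarrow> 'n bb_state \<Rightarrow> 'n bb_state" where
  "bb_process c P sol F s =
     (let (Q, inc) = s; v = c \<bullet> sol F in
      if lp_feas P F = {} then (Q, inc)
      else if integral_vec (sol F) then
        (Q, Some (case inc of None \<Rightarrow> v | Some z \<Rightarrow> max z v))
      else if (\<exists>z. inc = Some z \<and> v \<le> z) then (Q, inc)
      else (insert F Q, inc))"

definition bb_init ::
  "real^'n \<Rightarrow> (real^'n) set \<Rightarrow> (('n \<Rightarrow> bool option) \<Rightarrow> real^'n) \<Rightarrow> 'n bb_state" where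
  "bb_init c P sol = bb_process c P sol (\<lambda>_. None) ({}, None)"

text \<open>One iteration: worst-bound selection of an open node of largest LP value; it is
  pruned by bound or branched on a fractional variable (children created in either
  order).  The label is Some F iff the step branches on node F.\<close>
inductive bb_step ::
  "real^'n \<Rightarrow> (real^'n) set \<Rightarrow> (('n \<Rightarrow> bool option) \<Rightarrow> real^'n) \<Rightarrow>
   'n bb_state \<Rightarrow> ('n \<Rightarrow> bool option) option \<Rightarrow> 'n bb_state \<Rightarrow> bool"
  for c P sol where
  prune: "\<lbrakk>F \<in> Q; \<forall>G\<in>Q. c \<bullet> sol G \<le> c \<bullet> sol F; inc = Some z; c \<bullet> sol F \<le> z\<rbrakk>
          \<Longrightarrow> bb_step c P sol (Q, inc) None (Q - {F}, inc)"
| branch: "\<lbrakk>F \<in> Q; \<forall>G\<in>Q. c \<bullet> sol G \<le> c \<bullet> sol F;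
            \<not> (\<exists>z. inc = Some z \<and> c \<bullet> sol F \<le> z); sol F $ i \<notin> \<int>;
            F0 = F(i := Some False); F1 = F(i := Some True);
            s' = (if first1 then bb_process c P sol F0 (bb_process c P sol F1 (Q - {F}, inc))
                  else bb_process c P sol F1 (bb_process c P sol F0 (Q - {F}, inc)))\<rbrakk>
          \<Longrightarrow> bb_step c P sol (Q, inc) (Some F) s'"

inductive bb_reach ::
  "real^'n \<Rightarrow> (real^'n) set \<Rightarrow> (('n \<Rightarrow> bool option) \<Rightarrow> real^'n) \<Rightarrow> 'n bb_state \<Rightarrow> bool"
  for c P sol where
  init: "bb_reach c P sol (bb_init c P sol)"
| step: "\<lbrakk>bb_reach c P sol s; bb_step c P sol s l s'\<rbrakk> \<Longrightarrow> bb_reach c P sol s'"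

end

theory Submission
  imports Defs
begin

text \<open>Let z* be the MILP optimum.  Every reachable state satisfies: each open node is
  feasible with a fractional LP solution, the incumbent is at most z*, and either the
  incumbent equals z* or some open node still contains a binary point of value z*.
  Branching on F requires F not to be pruned by the incumbent, so either the incumbent is
  z* and then c \<bullet> sol F > z*, or an open node G contains such a point.  In the latter case
  the LP value of G is at least z*, and it cannot equal z*: that binary point would then
  be an integral LP optimum, so by Assumption 1 sol G would be integral and G would not
  be open.  By the worst-bound rule c \<bullet> sol F \<ge> c \<bullet> sol G > z*.\<close>

lemma Ints_between_0_1:
  fixes a :: real
  assumes "a \<in> \<int>" "0 \<le> a" "a \<le> 1"
  shows "a = 0 \<or> a = 1"
proof -
  obtain k where k: "a = of_int k" using assms(1) by (auto elim: Ints_cases)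
  with assms(2,3) have "k = 0 \<or> k = 1" by auto
  with k show ?thesis by auto
qed

lemma binary_imp_integral_vec: "binary x \<Longrightarrow> integral_vec x"
  unfolding binary_def integral_vec_def by (metis Ints_0 Ints_1)

lemma integral_vec_lp_feas_imp_binary:
  "x \<in> lp_feas P F \<Longrightarrow> integral_vec x \<Longrightarrow> binary x"
  using Ints_between_0_1 unfolding lp_feas_def integral_vec_def binary_def by blast

lemma binary_in_lp_feas_root:
  assumes "x \<in> P" "binary x"
  shows "x \<in> lp_feas P (\<lambda>_. None)"
proof -
  have "\<forall>i. 0 \<le> x$i \<and> x$i \<le> 1"
    using assms(2) unfolding binary_def by (metis order_refl zero_le_one)
  with assms(1) show ?thesis unfolding lp_feas_def by simp
qed

definition has_binary_of_value ::
  "real^'n \<Rightarrow> (real^'n) set \<Rightarrow> real \<Rightarrow> ('n \<Rightarrow> bool option) \<Rightarrow> bool" where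
  "has_binary_of_value c P z G \<longleftrightarrow> (\<exists>x\<in>lp_feas P G. binary x \<and> c \<bullet> x = z)"

lemma has_binary_of_value_branch:
  assumes "has_binary_of_value c P z F"
  shows "has_binary_of_value c P z (F(i := Some False)) \<or>
         has_binary_of_value c P z (F(i := Some True))"
proof -
  obtain x where x: "x \<in> lp_feas P F" "binary x" "c \<bullet> x = z"
    using assms unfolding has_binary_of_value_def by auto
  have "x$i = 0 \<or> x$i = 1" using x(2) unfolding binary_def by auto
  then have "x \<in> lp_feas P (F(i := Some False)) \<or> x \<in> lp_feas P (F(i := Some True))"
    using x(1) unfolding lp_feas_def by auto
  with x show ?thesis unfolding has_binary_of_value_def by blast
qed

locale bb_instance =
  fixes c :: "real^'n" and P :: "(real^'n) set"
    and sol :: "('n \<Rightarrow> bool option) \<Rightarrow> real^'n" and xopt :: "real^'n"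
  assumes solver_ok: "\<forall>F. lp_feas P F \<noteq> {} \<longrightarrow> lp_solver_ok c P F (sol F)"
    and xopt: "milp_opt c P xopt"
begin

abbreviation zopt :: real where "zopt \<equiv> c \<bullet> xopt"

lemma integral_value_le_opt:
  assumes "lp_feas P F \<noteq> {}" "integral_vec (sol F)"
  shows "c \<bullet> sol F \<le> zopt"
proof -
  have "sol F \<in> lp_feas P F" using solver_ok assms(1) unfolding lp_solver_ok_def lp_opt_def by blast
  then have "sol F \<in> P" "binary (sol F)"
    using assms(2) integral_vec_lp_feas_imp_binary unfolding lp_feas_def by auto
  then show ?thesis using xopt unfolding milp_opt_def by blast
qed

lemma opt_le_value:
  assumes "has_binary_of_value c P zopt G"
  shows "zopt \<le> c \<bullet> sol G"
  using assms solver_ok unfolding has_binary_of_value_def lp_solver_ok_def lp_opt_def by fastforce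

lemma opt_less_fractional_value:
  assumes G: "has_binary_of_value c P zopt G" and frac: "\<not> integral_vec (sol G)"
  shows "zopt < c \<bullet> sol G"
proof -
  obtain x where x: "x \<in> lp_feas P G" "binary x" "c \<bullet> x = zopt"
    using G unfolding has_binary_of_value_def by auto
  then have ok: "lp_solver_ok c P G (sol G)" using solver_ok by auto
  have "zopt \<noteq> c \<bullet> sol G"
  proof
    assume "zopt = c \<bullet> sol G"
    with ok x have "lp_opt c P G x" unfolding lp_solver_ok_def lp_opt_def by auto
    with ok x(2) have "integral_vec (sol G)"
      using binary_imp_integral_vec unfolding lp_solver_ok_def by blast
    with frac show False ..
  qed
  with opt_le_value[OF G] show ?thesis by simp
qed

definition sound_state :: "'n bb_state \<Rightarrow> bool" where
  "sound_state s \<longleftrightarrow> (\<forall>G\<in>fst s. lp_feas P G \<noteq> {} \<and> \<not> integral_vec (sol G)) \<and>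
                     (\<forall>z. snd s = Some z \<longrightarrow> z \<le> zopt)"

definition tracks_opt :: "'n bb_state \<Rightarrow> bool" where
  "tracks_opt s \<longleftrightarrow> snd s = Some zopt \<or> (\<exists>G\<in>fst s. has_binary_of_value c P zopt G)"

lemma sound_state_process:
  assumes "sound_state s"
  shows "sound_state (bb_process c P sol F s)"
proof -
  obtain Q inc where s: "s = (Q, inc)" by fastforce
  show ?thesis using assms integral_value_le_opt
    unfolding s sound_state_def bb_process_def Let_def by (auto split: option.splits)
qed

lemma tracks_opt_process:
  assumes sound: "sound_state s" and track: "tracks_opt s \<or> has_binary_of_value c P zopt F"
  shows "tracks_opt (bb_process c P sol F s)"
proof -
  obtain Q inc where s: "s = (Q, inc)" by fastforce
  have inc_le: "\<And>z. inc = Some z \<Longrightarrow> z \<le> zopt" using sound s unfolding sound_state_def by auto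
  show ?thesis
  proof (cases "tracks_opt s")
    case True
    then show ?thesis using inc_le integral_value_le_opt
      unfolding s bb_process_def Let_def tracks_opt_def by (auto split: option.splits)
  next
    case False
    with track have F: "has_binary_of_value c P zopt F" by simp
    then have feas: "lp_feas P F \<noteq> {}" unfolding has_binary_of_value_def by auto
    have ge: "zopt \<le> c \<bullet> sol F" using opt_le_value[OF F] .
    consider "integral_vec (sol F)"
      | "\<not> integral_vec (sol F)" "inc = Some zopt"
      | "\<not> integral_vec (sol F)" "\<not> (\<exists>z. inc = Some z \<and> c \<bullet> sol F \<le> z)"
      using inc_le ge by force
    then show ?thesis
    proof cases
      case 1
      with feas ge integral_value_le_opt have "c \<bullet> sol F = zopt" by force
      with 1 feas inc_le show ?thesis
        unfolding s bb_process_def Let_def tracks_opt_def by (auto split: option.splits)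
    qed (use feas F in \<open>auto simp: s bb_process_def tracks_opt_def\<close>)
  qed
qed

lemma sound_tracks_opt_reach:
  assumes "bb_reach c P sol s"
  shows "sound_state s \<and> tracks_opt s"
  using assms
proof induction
  case init
  have "has_binary_of_value c P zopt (\<lambda>_. None)"
    using xopt binary_in_lp_feas_root unfolding has_binary_of_value_def milp_opt_def by blast
  moreover have "sound_state ({}, None)" unfolding sound_state_def by simp
  ultimately show ?case
    unfolding bb_init_def using sound_state_process tracks_opt_process by blast
next
  case (step s l s')
  from step.hyps(2) show ?case
  proof cases
    case (prune F Q inc z)
    have "snd s = Some zopt" if "has_binary_of_value c P zopt F"
      using opt_le_value[OF that] prune step.IH unfolding sound_state_def by force
    with prune step.IH show ?thesis unfolding sound_state_def tracks_opt_def by auto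
  next
    case (branch F Q inc i F0 F1 first1)
    let ?s0 = "(Q - {F}, inc)"
    have sound0: "sound_state ?s0" using step.IH branch unfolding sound_state_def by auto
    have track0: "tracks_opt ?s0 \<or> has_binary_of_value c P zopt F"
      using step.IH branch unfolding tracks_opt_def by auto
    have "sound_state (bb_process c P sol A (bb_process c P sol B ?s0)) \<and>
          tracks_opt (bb_process c P sol A (bb_process c P sol B ?s0))"
      if "has_binary_of_value c P zopt F \<Longrightarrow>
          has_binary_of_value c P zopt A \<or> has_binary_of_value c P zopt B" for A B
      using sound0 track0 that sound_state_process tracks_opt_process by meson
    with branch has_binary_of_value_branch show ?thesis by (metis (no_types, lifting))
  qed
qed

lemma opt_less_branched_value:
  assumes "bb_reach c P sol s" "bb_step c P sol s (Some F) s'"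
  shows "zopt < c \<bullet> sol F"
  using assms(2)
proof cases
  case (branch Q inc i F0 F1 first1)
  have "sound_state s" "tracks_opt s" using sound_tracks_opt_reach[OF assms(1)] by auto
  then consider "inc = Some zopt"
    | G where "G \<in> Q" "has_binary_of_value c P zopt G" "\<not> integral_vec (sol G)"
    using branch unfolding sound_state_def tracks_opt_def by auto
  then show ?thesis
  proof cases
    case (2 G)
    then show ?thesis using opt_less_fractional_value branch by force
  qed (use branch in auto)
qed

end

theorem mainTheorem8:
  fixes P :: "(real^'n) set" and c :: "real^'n"
    and sol :: "('n \<Rightarrow> bool option) \<Rightarrow> real^'n" and xopt :: "real^'n"
  assumes "polyhedron P"
    and "\<forall>F. lp_feas P F \<noteq> {} \<longrightarrow> lp_solver_ok c P F (sol F)"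
    and "milp_opt c P xopt"
    and "bb_reach c P sol s"
    and "bb_step c P sol s (Some F) s'"
  shows "c \<bullet> sol F \<noteq> c \<bullet> xopt"
proof -
  interpret bb_instance c P sol xopt
    using assms(2,3) by unfold_locales
  show ?thesis using opt_less_branched_value[OF assms(4,5)] by simp
qed

end
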